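(* Let $H$ be a connected graph and let $v\in \mathrm{MS}(H)$. Then every loopless connected component of $H|v$ consists of a single isolated vertex.
   Context: Graphs are finite, may have loops, but no multiple edges; an edge is either $\{u\}$ (a loop at $u$) or $\{u,w\}$ with $u\ne w$. A vertex is isolated if no edge (including a loop) is incident to it. A graph is loopless if no vertex is looped. For $v\in V(H)$, $N_H(v)=\{u\in V(H): u\neq v,\ \{u,v\}\in E(H)\}$. Let $L$ be the set of looped vertices; $N^l_H(v)=N_H(v)\cap L$ and $N^{ul}_H(v)=N_H(v)\setminus L$. Define $s(v)=|N^{ul}_H(v)|-|N^l_H(v)|$, and let $\mathrm{MS}(H)$ be the set of looped vertices $v$ of $H$ such that $s(w)\le s(v)$ for all $w\in N^l_H(v)$. For a looped vertex $v$, the local complement $H*v$ is the graph on $V(H)$ such that for every $p\subseteq V(H)$ with $|p|\in\{1,2\}$: $p\in E(H*v)$ iff either ($p\notin E(H)$ and $p\subseteq N_H(v)$) or ($p\in E(H)$ and $p\not\subseteq N_H(v)$). $H*_c v$ is obtained from $H*v$ by removing all edges incident to $v$, including its loop; $H|v$ is obtained from $H*_c v$ by deleting the vertex $v$. *)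

theory Defs
  imports Main
begin

text \<open>A graph is given by a finite vertex set V and a set E of edges, each edge
being a set of 1 (loop) or 2 vertices of V.\<close>

definition graph :: "'a set \<Rightarrow> 'a set set \<Rightarrow> bool" where
  "graph V E \<longleftrightarrow> finite V \<and> (\<forall>e\<in>E. e \<subseteq> V \<and> (card e = 1 \<or> card e = 2))"

definition looped :: "'a set set \<Rightarrow> 'a \<Rightarrow> bool" where
  "looped E u \<longleftrightarrow> {u} \<in> E"

definition loopset :: "'a set \<Rightarrow> 'a set set \<Rightarrow> 'a set" where
  "loopset V E = {u\<in>V. looped E u}"

definition isolated :: "'a set set \<Rightarrow> 'a \<Rightarrow> bool" where
  "isolated E u \<longleftrightarrow> (\<forall>e\<in>E. u \<notin> e)"

definition nbhd :: "'a set \<Rightarrow> 'a set set \<Rightarrow> 'a \<Rightarrow> 'a set" where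
  "nbhd V E v = {u\<in>V. u \<noteq> v \<and> {u, v} \<in> E}"

definition nbhd_l :: "'a set \<Rightarrow> 'a set set \<Rightarrow> 'a \<Rightarrow> 'a set" where
  "nbhd_l V E v = nbhd V E v \<inter> loopset V E"

definition nbhd_ul :: "'a set \<Rightarrow> 'a set set \<Rightarrow> 'a \<Rightarrow> 'a set" where
  "nbhd_ul V E v = nbhd V E v - loopset V E"

definition sval :: "'a set \<Rightarrow> 'a set set \<Rightarrow> 'a \<Rightarrow> int" where
  "sval V E v = int (card (nbhd_ul V E v)) - int (card (nbhd_l V E v))"

definition MS :: "'a set \<Rightarrow> 'a set set \<Rightarrow> 'a set" where
  "MS V E = {v \<in> loopset V E. \<forall>w\<in>nbhd_l V E v. sval V E w \<le> sval V E v}"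

definition local_compl :: "'a set \<Rightarrow> 'a set set \<Rightarrow> 'a \<Rightarrow> 'a set set" where
  "local_compl V E v = {p. p \<subseteq> V \<and> (card p = 1 \<or> card p = 2) \<and>
     ((p \<notin> E \<and> p \<subseteq> nbhd V E v) \<or> (p \<in> E \<and> \<not> p \<subseteq> nbhd V E v))}"

definition local_compl_c :: "'a set \<Rightarrow> 'a set set \<Rightarrow> 'a \<Rightarrow> 'a set set" where
  "local_compl_c V E v = {p \<in> local_compl V E v. v \<notin> p}"

text \<open>H|v: delete v from H *_c v. Vertex set V - {v}, edge set as above.\<close>
definition pivot_del_V :: "'a set \<Rightarrow> 'a \<Rightarrow> 'a set" where
  "pivot_del_V V v = V - {v}"

definition pivot_del_E :: "'a set \<Rightarrow> 'a set set \<Rightarrow> 'a \<Rightarrow> 'a set set" where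
  "pivot_del_E V E v = local_compl_c V E v"

definition adj :: "'a set set \<Rightarrow> 'a \<Rightarrow> 'a \<Rightarrow> bool" where
  "adj E u w \<longleftrightarrow> u \<noteq> w \<and> {u, w} \<in> E"

definition reachable :: "'a set \<Rightarrow> 'a set set \<Rightarrow> 'a \<Rightarrow> 'a \<Rightarrow> bool" where
  "reachable V E u w \<longleftrightarrow> u \<in> V \<and> w \<in> V \<and> (\<lambda>x y. x \<in> V \<and> y \<in> V \<and> adj E x y)\<^sup>*\<^sup>* u w"

definition connected_graph :: "'a set \<Rightarrow> 'a set set \<Rightarrow> bool" where
  "connected_graph V E \<longleftrightarrow> V \<noteq> {} \<and> (\<forall>u\<in>V. \<forall>w\<in>V. reachable V E u w)"

definition components :: "'a set \<Rightarrow> 'a set set \<Rightarrow> 'a set set" where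
  "components V E = {{w. reachable V E u w} | u. u \<in> V}"

definition loopless_set :: "'a set set \<Rightarrow> 'a set \<Rightarrow> bool" where
  "loopless_set E C \<longleftrightarrow> (\<forall>u\<in>C. \<not> looped E u)"

end

theory Submission
  imports Defs
begin

text \<open>A loopless component C of H|v contains a neighbour w of v, because H is connected.
  Looplessness of C says that a vertex of C is looped in H exactly when it lies in N(v);
  in particular w is looped, so the maximality of s(v) gives s(w) \<le> s(v). Comparing the
  neighbourhoods of w and v through the local complementation shows
  s(w) = s(v) + |N_{H|v}(w)|, so w has no neighbour in H|v and C = {w}.\<close>

lemma graph_edge_cases:
  assumes "graph V E" "e \<in> E"
  shows "e \<subseteq> V \<and> ((\<exists>x. e = {x}) \<or> (\<exists>x y. x \<noteq> y \<and> e = {x, y}))"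
  using assms unfolding graph_def by (simp add: card_1_singleton_iff card_2_iff) blast

lemma isolatedI:
  assumes "graph V E" "\<not> looped E w" "nbhd V E w = {}"
  shows "isolated E w"
  unfolding isolated_def
proof (intro ballI notI)
  fix e assume "e \<in> E" "w \<in> e"
  with graph_edge_cases[OF assms(1)] assms(2,3) show False
    unfolding looped_def nbhd_def by (fastforce simp: insert_commute)
qed

lemma reachable_sym:
  assumes "reachable V E u w"
  shows "reachable V E w u"
proof -
  let ?R = "\<lambda>x y. x \<in> V \<and> y \<in> V \<and> adj E x y"
  have "?R\<^sup>*\<^sup>* w u" if "?R\<^sup>*\<^sup>* u w" using that
  proof (induction rule: rtranclp_induct)
    case (step y z)
    then have "?R z y" unfolding adj_def by (auto simp: insert_commute)
    from this step.IH show ?case by (rule converse_rtranclp_into_rtranclp)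
  qed simp
  with assms show ?thesis unfolding reachable_def by blast
qed

lemma reachable_trans:
  "reachable V E u w \<Longrightarrow> reachable V E w x \<Longrightarrow> reachable V E u x"
  unfolding reachable_def by auto

lemma reachable_step:
  "reachable V E u x \<Longrightarrow> y \<in> V \<Longrightarrow> adj E x y \<Longrightarrow> reachable V E u y"
  unfolding reachable_def by (auto intro: rtranclp.rtrancl_into_rtrancl)

lemma component_subset: "C \<in> components V E \<Longrightarrow> C \<subseteq> V"
  unfolding components_def reachable_def by auto

lemma component_nonempty: "C \<in> components V E \<Longrightarrow> C \<noteq> {}"
  unfolding components_def reachable_def by auto

lemma component_adj_closed:
  "C \<in> components V E \<Longrightarrow> x \<in> C \<Longrightarrow> y \<in> V \<Longrightarrow> adj E x y \<Longrightarrow> y \<in> C"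
  unfolding components_def by (auto intro: reachable_step)

lemma component_eq_reachable:
  assumes "C \<in> components V E" "w \<in> C"
  shows "C = {x. reachable V E w x}"
proof -
  obtain u where C: "C = {x. reachable V E u x}"
    using assms(1) unfolding components_def by auto
  with assms(2) show ?thesis
    by (auto intro: reachable_trans reachable_sym)
qed

lemma component_eq_singleton:
  assumes "C \<in> components V E" "w \<in> C" "nbhd V E w = {}"
  shows "C = {w}"
proof -
  let ?R = "\<lambda>x y. x \<in> V \<and> y \<in> V \<and> adj E x y"
  have "x = w" if "?R\<^sup>*\<^sup>* w x" for x using that
  proof (induction rule: rtranclp_induct)
    case (step y z)
    with assms(3) show ?case unfolding nbhd_def adj_def by (auto simp: insert_commute)
  qed simp
  with component_eq_reachable[OF assms(1,2)] assms(2) show ?thesis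
    unfolding reachable_def by auto
qed

lemma pivot_del_E_pair_iff:
  assumes "x \<in> V" "y \<in> V" "x \<noteq> y" "x \<noteq> v" "y \<noteq> v"
  shows "{x, y} \<in> pivot_del_E V E v \<longleftrightarrow> (({x, y} \<in> E) \<noteq> (x \<in> nbhd V E v \<and> y \<in> nbhd V E v))"
  using assms unfolding pivot_del_E_def local_compl_c_def local_compl_def by auto

lemma pivot_del_E_looped_iff:
  assumes "x \<in> V" "x \<noteq> v"
  shows "looped (pivot_del_E V E v) x \<longleftrightarrow> (looped E x \<noteq> (x \<in> nbhd V E v))"
  using assms unfolding looped_def pivot_del_E_def local_compl_c_def local_compl_def by auto

lemma graph_pivot_del: "graph V E \<Longrightarrow> graph (pivot_del_V V v) (pivot_del_E V E v)"
  unfolding graph_def pivot_del_V_def pivot_del_E_def local_compl_c_def local_compl_def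
  by auto

lemma component_pivot_del_meets_nbhd:
  assumes "connected_graph V E" "v \<in> V"
    and C: "C \<in> components (pivot_del_V V v) (pivot_del_E V E v)"
  shows "C \<inter> nbhd V E v \<noteq> {}"
proof
  assume CN: "C \<inter> nbhd V E v = {}"
  have CV: "C \<subseteq> V - {v}" using component_subset[OF C] unfolding pivot_del_V_def .
  obtain u where "u \<in> C" using component_nonempty[OF C] by auto
  text \<open>A walk in H leaving C would have to leave through N(v), where H and H|v differ.\<close>
  have "t \<in> C" if "(\<lambda>x y. x \<in> V \<and> y \<in> V \<and> adj E x y)\<^sup>*\<^sup>* u t" for t
    using that
  proof (induction rule: rtranclp_induct)
    case base show ?case by fact
  next
    case (step y z)
    have y: "y \<in> V" "y \<noteq> v" "y \<notin> nbhd V E v" using step.IH CV CN by auto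
    with step.hyps(2) have "z \<noteq> v" unfolding adj_def nbhd_def by (auto simp: insert_commute)
    with y step.hyps(2) have "adj (pivot_del_E V E v) y z"
      using pivot_del_E_pair_iff[of y V z v E] unfolding adj_def by auto
    with step.IH step.hyps(2) \<open>z \<noteq> v\<close> show ?case
      by (auto simp: pivot_del_V_def intro: component_adj_closed[OF C, of y])
  qed
  moreover have "reachable V E u v"
    using assms(1,2) CV \<open>u \<in> C\<close> unfolding connected_graph_def by auto
  ultimately have "v \<in> C" unfolding reachable_def by blast
  with CV show False by auto
qed

text \<open>The last assumption is what looplessness of the component of w in H|v provides.\<close>

context
  fixes V :: "'a set" and E :: "'a set set" and v w :: 'a
  assumes graph: "graph V E"
    and v_looped: "looped E v"
    and w_nbhd_l: "w \<in> nbhd_l V E v"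
    and looped_iff: "\<And>x. x \<in> nbhd (pivot_del_V V v) (pivot_del_E V E v) w \<Longrightarrow>
                       looped E x \<longleftrightarrow> x \<in> nbhd V E v"
begin

private abbreviation "N \<equiv> nbhd V E v"
private abbreviation "D \<equiv> nbhd (pivot_del_V V v) (pivot_del_E V E v) w"

private lemma w_facts: "w \<in> V" "w \<noteq> v" "{w, v} \<in> E" "looped E w" "w \<in> N"
  using w_nbhd_l unfolding nbhd_l_def nbhd_def loopset_def by auto

private lemma v_in_V: "v \<in> V"
  using graph_edge_cases[OF graph w_facts(3)] by auto

private lemma mem_D_iff:
  assumes "x \<in> V" "x \<noteq> v" "x \<noteq> w"
  shows "x \<in> D \<longleftrightarrow> (({w, x} \<in> E) \<noteq> (x \<in> N))"
  using pivot_del_E_pair_iff[of w V x v E] assms w_facts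
  unfolding nbhd_def pivot_del_V_def by (auto simp: insert_commute)

private lemma D_subset: "D \<subseteq> V - {v, w}"
  unfolding nbhd_def pivot_del_V_def by auto

private lemma nbhd_ul_w: "nbhd_ul V E w = nbhd_ul V E v \<union> (D - N)"
proof -
  have "x \<in> nbhd_ul V E w \<longleftrightarrow> x \<in> nbhd_ul V E v \<union> (D - N)" for x
  proof (cases "x \<in> V \<and> x \<noteq> v \<and> x \<noteq> w")
    case True
    then show ?thesis
      using mem_D_iff[of x] looped_iff[of x]
      unfolding nbhd_ul_def nbhd_def loopset_def by (auto simp: insert_commute)
  next
    case False
    then show ?thesis using D_subset v_looped w_facts
      unfolding nbhd_ul_def nbhd_def loopset_def by auto
  qed
  then show ?thesis by blast
qed

private lemma nbhd_l_w: "nbhd_l V E w = insert v (nbhd_l V E v - {w} - D)"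
proof -
  have "x \<in> nbhd_l V E w \<longleftrightarrow> x \<in> insert v (nbhd_l V E v - {w} - D)" for x
  proof (cases "x \<in> V \<and> x \<noteq> v \<and> x \<noteq> w")
    case True
    then show ?thesis
      using mem_D_iff[of x] looped_iff[of x]
      unfolding nbhd_l_def nbhd_def loopset_def by (auto simp: insert_commute)
  next
    case False
    then show ?thesis using D_subset v_looped v_in_V w_facts
      unfolding nbhd_l_def nbhd_def loopset_def by (auto simp: insert_commute)
  qed
  then show ?thesis by blast
qed

lemma sval_nbhd_pivot_del:
  "sval V E w = sval V E v + int (card (nbhd (pivot_del_V V v) (pivot_del_E V E v) w))"
proof -
  let ?L = "nbhd_l V E v"
  have finN: "finite N" using graph unfolding graph_def nbhd_def by auto
  have finL: "finite ?L" using finN unfolding nbhd_l_def by auto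
  have finD: "finite D" using graph D_subset finite_subset unfolding graph_def by blast
  have "?L = insert w ((D \<inter> N) \<union> (?L - {w} - D))"
    using w_nbhd_l looped_iff D_subset unfolding nbhd_l_def loopset_def by auto
  then have "card ?L = card (insert w ((D \<inter> N) \<union> (?L - {w} - D)))" by (rule arg_cong)
  also have "\<dots> = Suc (card ((D \<inter> N) \<union> (?L - {w} - D)))"
    using finL finD D_subset by (intro card_insert_disjoint) auto
  also have "\<dots> = 1 + card (D \<inter> N) + card (?L - {w} - D)"
    using finL finD by (subst card_Un_disjoint) auto
  finally have card_l_v: "card ?L = 1 + card (D \<inter> N) + card (?L - {w} - D)" .
  have card_l_w: "card (nbhd_l V E w) = 1 + card (?L - {w} - D)"
    using finL v_in_V unfolding nbhd_l_w by (simp add: nbhd_l_def nbhd_def)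
  have card_ul_w: "card (nbhd_ul V E w) = card (nbhd_ul V E v) + card (D - N)"
    using finN finD unfolding nbhd_ul_w by (subst card_Un_disjoint) (auto simp: nbhd_ul_def)
  have card_D: "card D = card (D - N) + card (D \<inter> N)"
    using finD by (metis Int_Diff_disjoint Un_Diff_Int card_Un_disjoint finite_Diff finite_Int Int_commute)
  from card_l_v card_l_w card_ul_w card_D show ?thesis unfolding sval_def by linarith
qed

end

theorem mainTheorem5:
  fixes V :: "'a set" and E :: "'a set set" and v :: 'a
  assumes "graph V E"
    and "connected_graph V E"
    and "v \<in> MS V E"
  shows "\<forall>C \<in> components (pivot_del_V V v) (pivot_del_E V E v).
           loopless_set (pivot_del_E V E v) C \<longrightarrow>
           (\<exists>u. C = {u} \<and> isolated (pivot_del_E V E v) u)"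
proof (intro ballI impI)
  let ?V' = "pivot_del_V V v" and ?E' = "pivot_del_E V E v"
  fix C assume C: "C \<in> components ?V' ?E'" and loopless: "loopless_set ?E' C"
  have v: "v \<in> V" "looped E v" using assms(3) unfolding MS_def loopset_def by auto
  have CV: "C \<subseteq> V - {v}" using component_subset[OF C] unfolding pivot_del_V_def .
  have looped_iff: "looped E x \<longleftrightarrow> x \<in> nbhd V E v" if "x \<in> C" for x
    using pivot_del_E_looped_iff[of x V v E] loopless that CV unfolding loopless_set_def by auto
  obtain w where w: "w \<in> C" "w \<in> nbhd V E v"
    using component_pivot_del_meets_nbhd[OF assms(2) v(1) C] by auto
  then have "w \<in> nbhd_l V E v" using looped_iff unfolding nbhd_l_def nbhd_def loopset_def by auto
  then have "sval V E w \<le> sval V E v" using assms(3) unfolding MS_def by auto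
  moreover have "sval V E w = sval V E v + int (card (nbhd ?V' ?E' w))"
  proof (rule sval_nbhd_pivot_del[OF assms(1) v(2) \<open>w \<in> nbhd_l V E v\<close>])
    fix x assume "x \<in> nbhd ?V' ?E' w"
    then have "x \<in> C" using component_adj_closed[OF C w(1)]
      unfolding nbhd_def adj_def by (auto simp: insert_commute)
    then show "looped E x \<longleftrightarrow> x \<in> nbhd V E v" by (rule looped_iff)
  qed
  moreover have "finite (nbhd ?V' ?E' w)"
    using assms(1) unfolding graph_def nbhd_def pivot_del_V_def by auto
  ultimately have "nbhd ?V' ?E' w = {}" by simp
  moreover have "\<not> looped ?E' w" using loopless w(1) unfolding loopless_set_def by auto
  ultimately show "\<exists>u. C = {u} \<and> isolated ?E' u"
    using component_eq_singleton[OF C w(1)] isolatedI[OF graph_pivot_del[OF assms(1)]] by blast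
qed

end
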